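(* Consider the Robust protocol with parameters $k,\varepsilon,c$ (described in the context) and a single round of it that starts at event count $n_0$. Let $R$ be the number of events in the round and, for an event count $n$, let $\hat n$ denote the server's estimate when the event count is $n$. Then \[ \Pr\!\left[\max_{n\in[n_0,\,n_0+R-1]}\frac{|n-\hat n|}{n}>\varepsilon\right]\le 2\exp\!\left(-\min\!\left\{\frac{c^2}{8},\frac{c\sqrt k}{4}\right\}\right). \]
   Context: Distributed counting: a server and $k$ sites; events arrive one at a time, each at some site; $n_i$ is the number of events at site $i$ so far and the event count is $n=\sum_in_i$. Robust protocol with parameters $k$, $\varepsilon>0$, $c\ge1$: each site $i$ keeps a transmission probability $p$ (initially $1$, updated by server broadcasts) and its count $n_i$. On each event at site $i$: $n_i\gets n_i+1$, and independently with probability $p$ the site sends ReportSample to the server. On receiving CountRequest, site $i$ sends its current $n_i$. The server keeps a counter $B=0$, values $\bar n_i=0$, and $p=1$; its estimate is $\hat n=\bar n+B/p$ with $\bar n=\sum_i\bar n_i$. On receiving ReportSample the server sets $B\gets B+1$; if now $B=k$, the round ends and a new round begins: the server broadcasts CountRequest, sets each $\bar n_i$ to the reported exact $n_i$, sets $p\gets\min\{1,c\sqrt k/(\varepsilon\bar n)\}$, broadcasts $p$, and sets $B\gets0$. The probability is over the protocol's randomness during the round. *)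

theory Defs
  imports "HOL-Probability.Probability"
begin

text \<open>At the start of the round the server has the exact count n0 (from CountRequest),
  B = 0, and the transmission probability is p = min 1 (c sqrt k / (eps n0)).
  (For the very first round n0 = 0 and p = 1 is the initial value.)
  Each event of the round independently triggers ReportSample with probability p;
  omega i says whether the (i+1)-th event of the round sent ReportSample.
  Which site an event arrives at is irrelevant for these quantities.\<close>

definition robust_p :: "nat \<Rightarrow> real \<Rightarrow> real \<Rightarrow> nat \<Rightarrow> real" where
  "robust_p k eps c n0 = (if n0 = 0 then 1 else min 1 (c * sqrt (real k) / (eps * real n0)))"

definition round_space :: "real \<Rightarrow> (nat \<Rightarrow> bool) measure" where
  "round_space p = PiM UNIV (\<lambda>_::nat. measure_pmf (bernoulli_pmf p))"

definition samples :: "(nat \<Rightarrow> bool) \<Rightarrow> nat \<Rightarrow> nat" where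
  "samples \<omega> j = card {i. i < j \<and> \<omega> i}"

text \<open>R: the number of events in the round (the R-th event makes B = k and ends it).\<close>
definition round_len :: "nat \<Rightarrow> (nat \<Rightarrow> bool) \<Rightarrow> nat" where
  "round_len k \<omega> = (LEAST r. samples \<omega> r = k)"

definition estimate :: "nat \<Rightarrow> real \<Rightarrow> real \<Rightarrow> nat \<Rightarrow> (nat \<Rightarrow> bool) \<Rightarrow> nat \<Rightarrow> real" where
  "estimate k eps c n0 \<omega> j = real n0 + real (samples \<omega> j) / robust_p k eps c n0"

definition round_bad_event :: "nat \<Rightarrow> real \<Rightarrow> real \<Rightarrow> nat \<Rightarrow> (nat \<Rightarrow> bool) set" where
  "round_bad_event k eps c n0 =
     {\<omega> \<in> space (round_space (robust_p k eps c n0)).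
        \<exists>j < round_len k \<omega>.
          \<bar>real (n0 + j) - estimate k eps c n0 \<omega> j\<bar> / real (n0 + j) > eps}"

end

theory Submission
  imports Defs
begin

text \<open>Tilting a Bernoulli(\<open>p\<close>) coin by \<open>\<theta>\<close> gives the increments
  \<open>\<theta> [b] - p (e\<^sup>\<theta> - 1)\<close>, whose exponentials have mean at most \<open>1\<close>; their partial
  sums therefore exponentiate to a nonnegative supermartingale, and Ville's maximal
  inequality bounds the probability that they ever reach \<open>\<gamma>\<close> by \<open>e\<^sup>-\<^sup>\<gamma>\<close>.
  Before the round ends fewer than \<open>k\<close> samples have arrived, and for \<open>p < 1\<close> the choice
  \<open>p \<epsilon> n\<^sub>0 = c \<surd>k\<close> turns a relative error above \<open>\<epsilon>\<close> at count \<open>n\<^sub>0 + j\<close> into a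
  deviation \<open>|B - p j| \<ge> c \<surd>k\<close>.  With \<open>\<theta> = \<plusminus>min (c / (4 \<surd>k)) (1/2)\<close> either
  deviation forces the tilted partial sum above \<open>min (c\<^sup>2/8) (c \<surd>k/4)\<close>, and a union
  bound over the two directions gives the factor \<open>2\<close>.  For \<open>p = 1\<close> the estimate is
  exact almost surely.\<close>

lemma nn_integral_PiM_iter:
  fixes M :: "'a pmf"
  assumes [measurable]: "f \<in> borel_measurable (PiM UNIV (\<lambda>_::nat. measure_pmf M))"
  shows "(\<integral>\<^sup>+\<omega>. f \<omega> \<partial>PiM UNIV (\<lambda>_. measure_pmf M)) =
     (\<integral>\<^sup>+s. \<integral>\<^sup>+\<omega>. f (case_nat s \<omega>) \<partial>PiM UNIV (\<lambda>_. measure_pmf M) \<partial>M)"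
proof -
  interpret S: sequence_space "measure_pmf M"
    by unfold_locales
  interpret P: pair_sigma_finite "measure_pmf M" S.S ..
  have "(\<integral>\<^sup>+\<omega>. f \<omega> \<partial>S.S) = (\<integral>\<^sup>+X. f ((\<lambda>(s, \<omega>). case_nat s \<omega>) X) \<partial>(measure_pmf M \<Otimes>\<^sub>M S.S))"
    by (subst S.PiM_iter[symmetric]) (simp add: nn_integral_distr)
  also have "\<dots> = (\<integral>\<^sup>+s. \<integral>\<^sup>+\<omega>. f ((\<lambda>(s, \<omega>). case_nat s \<omega>) (s, \<omega>)) \<partial>S.S \<partial>M)"
    by (subst S.nn_integral_fst) simp_all
  finally show ?thesis
    by simp
qed

lemma borel_measurable_partial_sum[measurable]:
  fixes M :: "'a pmf" and g :: "'a \<Rightarrow> real"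
  shows "(\<lambda>\<omega>. \<Sum>i<j. g (\<omega> i)) \<in> borel_measurable (PiM UNIV (\<lambda>_::nat. measure_pmf M))"
  by (intro borel_measurable_sum measurable_compose[OF measurable_component_singleton]) simp_all

lemma sets_partial_sums_reach_within[measurable]:
  fixes M :: "'a pmf" and g :: "'a \<Rightarrow> real"
  shows "{\<omega>. \<exists>j\<le>N. \<gamma> \<le> (\<Sum>i<j. g (\<omega> i))} \<in> sets (PiM UNIV (\<lambda>_::nat. measure_pmf M))"
proof -
  have "{\<omega>::nat \<Rightarrow> 'a. \<exists>j\<le>N. \<gamma> \<le> (\<Sum>i<j. g (\<omega> i))} =
      {\<omega> \<in> space (PiM UNIV (\<lambda>_::nat. measure_pmf M)). \<exists>j\<le>N. \<gamma> \<le> (\<Sum>i<j. g (\<omega> i))}"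
    by (simp add: space_PiM)
  also have "\<dots> \<in> sets (PiM UNIV (\<lambda>_::nat. measure_pmf M))"
    by measurable
  finally show ?thesis .
qed

lemma partial_sums_case_nat_reach_iff:
  fixes g :: "'a \<Rightarrow> real"
  assumes "0 < \<gamma>"
  shows "(\<exists>j\<le>Suc N. \<gamma> \<le> (\<Sum>i<j. g (case_nat s \<omega> i))) \<longleftrightarrow>
         (\<exists>j\<le>N. \<gamma> - g s \<le> (\<Sum>i<j. g (\<omega> i)))"
proof -
  have shift: "(\<Sum>i<Suc j. g (case_nat s \<omega> i)) = g s + (\<Sum>i<j. g (\<omega> i))" for j
    by (subst sum.lessThan_Suc_shift) simp
  show ?thesis
  proof
    assume "\<exists>j\<le>Suc N. \<gamma> \<le> (\<Sum>i<j. g (case_nat s \<omega> i))"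
    then obtain j where "j \<le> Suc N" "\<gamma> \<le> (\<Sum>i<j. g (case_nat s \<omega> i))"
      by blast
    moreover from this assms obtain j' where "j = Suc j'"
      by (cases j) auto
    ultimately show "\<exists>j\<le>N. \<gamma> - g s \<le> (\<Sum>i<j. g (\<omega> i))"
      by (intro exI[of _ j']) (auto simp: shift simp del: sum.lessThan_Suc)
  next
    assume "\<exists>j\<le>N. \<gamma> - g s \<le> (\<Sum>i<j. g (\<omega> i))"
    then obtain j where "j \<le> N" "\<gamma> - g s \<le> (\<Sum>i<j. g (\<omega> i))"
      by blast
    then show "\<exists>j\<le>Suc N. \<gamma> \<le> (\<Sum>i<j. g (case_nat s \<omega> i))"
      by (intro exI[of _ "Suc j"]) (auto simp: shift simp del: sum.lessThan_Suc)
  qed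
qed

lemma emeasure_partial_sums_reach_within_le:
  fixes M :: "'a pmf" and g :: "'a \<Rightarrow> real"
  assumes mean_exp: "(\<integral>\<^sup>+s. exp (g s) \<partial>M) \<le> 1"
  shows "emeasure (PiM UNIV (\<lambda>_::nat. measure_pmf M)) {\<omega>. \<exists>j\<le>N. \<gamma> \<le> (\<Sum>i<j. g (\<omega> i))}
           \<le> exp (- \<gamma>)"
proof (induction N arbitrary: \<gamma>)
  let ?S = "PiM UNIV (\<lambda>_::nat. measure_pmf M)"
  let ?A = "\<lambda>N \<gamma>. {\<omega>::nat \<Rightarrow> 'a. \<exists>j\<le>N. \<gamma> \<le> (\<Sum>i<j. g (\<omega> i))}"
  interpret prob_space ?S
    by (intro prob_space_PiM measure_pmf.prob_space_axioms)
  have trivial: "emeasure ?S (?A N \<gamma>) \<le> exp (- \<gamma>)" if "\<gamma> \<le> 0" for N \<gamma>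
  proof -
    have "emeasure ?S (?A N \<gamma>) \<le> 1"
      by (rule emeasure_le_1)
    also have "1 \<le> ennreal (exp (- \<gamma>))"
      using that by simp
    finally show ?thesis .
  qed
  {
    case 0
    show ?case
      using trivial[of \<gamma> 0] by (cases "\<gamma> \<le> 0") auto
  next
    case (Suc N)
    show ?case
    proof (cases "\<gamma> \<le> 0")
      case False
      have "emeasure ?S (?A (Suc N) \<gamma>) = (\<integral>\<^sup>+\<omega>. indicator (?A (Suc N) \<gamma>) \<omega> \<partial>?S)"
        by simp
      also have "\<dots> = (\<integral>\<^sup>+s. \<integral>\<^sup>+\<omega>. indicator (?A (Suc N) \<gamma>) (case_nat s \<omega>) \<partial>?S \<partial>M)"
        by (rule nn_integral_PiM_iter) simp
      also have "\<dots> = (\<integral>\<^sup>+s. emeasure ?S (?A N (\<gamma> - g s)) \<partial>M)"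
        using False by (intro nn_integral_cong)
          (simp add: indicator_def partial_sums_case_nat_reach_iff flip: nn_integral_indicator)
      also have "\<dots> \<le> (\<integral>\<^sup>+s. exp (- (\<gamma> - g s)) \<partial>M)"
        by (intro nn_integral_mono Suc.IH)
      also have "\<dots> = (\<integral>\<^sup>+s. ennreal (exp (- \<gamma>)) * exp (g s) \<partial>M)"
        using exp_add[of "- \<gamma>"] by (simp add: ennreal_mult)
      also have "\<dots> = ennreal (exp (- \<gamma>)) * (\<integral>\<^sup>+s. exp (g s) \<partial>M)"
        by (rule nn_integral_cmult) simp
      also have "\<dots> \<le> ennreal (exp (- \<gamma>))"
        using mult_left_mono[OF mean_exp, of "ennreal (exp (- \<gamma>))"] by simp
      finally show ?thesis .
    qed (rule trivial)
  }
qed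

lemma sets_partial_sums_reach[measurable]:
  fixes M :: "'a pmf" and g :: "'a \<Rightarrow> real"
  shows "{\<omega>. \<exists>j. \<gamma> \<le> (\<Sum>i<j. g (\<omega> i))} \<in> sets (PiM UNIV (\<lambda>_::nat. measure_pmf M))"
proof -
  have "{\<omega>::nat \<Rightarrow> 'a. \<exists>j. \<gamma> \<le> (\<Sum>i<j. g (\<omega> i))} = (\<Union>N. {\<omega>. \<exists>j\<le>N. \<gamma> \<le> (\<Sum>i<j. g (\<omega> i))})"
    by auto
  then show ?thesis
    by simp
qed

theorem ville_maximal_inequality:
  fixes M :: "'a pmf" and g :: "'a \<Rightarrow> real"
  assumes "(\<integral>\<^sup>+s. exp (g s) \<partial>M) \<le> 1"
  shows "measure (PiM UNIV (\<lambda>_::nat. measure_pmf M)) {\<omega>. \<exists>j. \<gamma> \<le> (\<Sum>i<j. g (\<omega> i))}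
           \<le> exp (- \<gamma>)"
proof -
  let ?S = "PiM UNIV (\<lambda>_::nat. measure_pmf M)"
  let ?A = "\<lambda>N. {\<omega>::nat \<Rightarrow> 'a. \<exists>j\<le>N. \<gamma> \<le> (\<Sum>i<j. g (\<omega> i))}"
  interpret prob_space ?S
    by (intro prob_space_PiM measure_pmf.prob_space_axioms)
  have "{\<omega>::nat \<Rightarrow> 'a. \<exists>j. \<gamma> \<le> (\<Sum>i<j. g (\<omega> i))} = (\<Union>N. ?A N)"
    by auto
  moreover have "incseq ?A"
    by (auto simp: incseq_def) (meson order_trans)
  ultimately have "emeasure ?S {\<omega>::nat \<Rightarrow> 'a. \<exists>j. \<gamma> \<le> (\<Sum>i<j. g (\<omega> i))} = (SUP N. emeasure ?S (?A N))"
    by (simp add: SUP_emeasure_incseq image_subset_iff)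
  also have "\<dots> \<le> exp (- \<gamma>)"
    by (intro SUP_least emeasure_partial_sums_reach_within_le assms)
  finally show ?thesis
    by (simp add: emeasure_eq_measure)
qed

definition bernoulli_tilt :: "real \<Rightarrow> real \<Rightarrow> bool \<Rightarrow> real" where
  "bernoulli_tilt p \<theta> b = (if b then \<theta> else 0) - p * (exp \<theta> - 1)"

lemma nn_integral_exp_bernoulli_tilt_le:
  assumes "0 \<le> p" "p \<le> 1"
  shows "(\<integral>\<^sup>+b. exp (bernoulli_tilt p \<theta> b) \<partial>bernoulli_pmf p) \<le> 1"
proof -
  define y where "y = p * (exp \<theta> - 1)"
  have "exp (bernoulli_tilt p \<theta> True) = exp \<theta> * exp (- y)"
    using exp_add[of \<theta> "- y"] by (simp add: bernoulli_tilt_def y_def)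
  moreover have "exp (bernoulli_tilt p \<theta> False) = exp (- y)"
    by (simp add: bernoulli_tilt_def y_def)
  moreover have "p * exp \<theta> + (1 - p) = 1 + y"
    by (simp add: y_def algebra_simps)
  ultimately have "p * exp (bernoulli_tilt p \<theta> True) + (1 - p) * exp (bernoulli_tilt p \<theta> False)
      = (1 + y) * exp (- y)"
    by (metis distrib_right mult.assoc)
  also have "\<dots> \<le> exp y * exp (- y)"
    by (intro mult_right_mono) auto
  also have "\<dots> = 1"
    by (simp add: exp_minus)
  finally show ?thesis
    using assms by (simp add: ennreal_mult'[symmetric] ennreal_plus[symmetric] mult.commute
        del: ennreal_plus)
qed

lemma tilted_upper_deviation_ge:
  fixes \<theta> d k S q :: real
  assumes "0 \<le> \<theta>" "\<theta> \<le> 1" "0 \<le> d" "0 \<le> S" "S \<le> k" "q \<le> S - d"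
  shows "\<theta> * (d - \<theta> * k) \<le> \<theta> * S - q * (exp \<theta> - 1)"
proof -
  have lin: "\<theta> \<le> exp \<theta> - 1"
    using exp_ge_add_one_self[of \<theta>] by linarith
  have quad: "exp \<theta> - 1 - \<theta> \<le> \<theta>\<^sup>2"
    using exp_bound[OF assms(1,2)] by linarith
  have "\<theta> * (d - \<theta> * k) \<le> d * (exp \<theta> - 1) - k * (exp \<theta> - 1 - \<theta>)"
    using mult_left_mono[OF lin assms(3)] mult_left_mono[OF quad, of k] assms(4,5)
    by (simp add: power2_eq_square algebra_simps)
  also have "\<dots> \<le> d * (exp \<theta> - 1) - S * (exp \<theta> - 1 - \<theta>)"
    using mult_right_mono[OF assms(5), of "exp \<theta> - 1 - \<theta>"] lin by linarith
  also have "\<dots> = \<theta> * S - (S - d) * (exp \<theta> - 1)"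
    by (simp add: algebra_simps)
  also have "\<dots> \<le> \<theta> * S - q * (exp \<theta> - 1)"
    using mult_right_mono[OF assms(6), of "exp \<theta> - 1"] lin assms(1) by linarith
  finally show ?thesis .
qed

lemma tilted_lower_deviation_ge:
  fixes \<theta> d k S q :: real
  assumes "0 \<le> \<theta>" "0 \<le> d" "0 \<le> S" "S \<le> k" "S + d \<le> q"
  shows "\<theta> * (d - \<theta> * k) / (1 + \<theta>) \<le> - \<theta> * S - q * (exp (- \<theta>) - 1)"
proof -
  have "exp (- \<theta>) \<le> 1 / (1 + \<theta>)"
    using exp_ge_add_one_self[of \<theta>] assms(1) by (simp add: exp_minus field_simps)
  then have gap: "\<theta> / (1 + \<theta>) \<le> 1 - exp (- \<theta>)"
    using assms(1) by (simp add: field_simps)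
  have "\<theta> * (d - \<theta> * k) / (1 + \<theta>) \<le> \<theta> * (d - \<theta> * S) / (1 + \<theta>)"
    using assms(1,4) by (intro divide_right_mono mult_left_mono) (auto intro: mult_left_mono)
  also have "\<dots> = - \<theta> * S + (S + d) * (\<theta> / (1 + \<theta>))"
    using assms(1) by (simp add: field_simps)
  also have "\<dots> \<le> - \<theta> * S + (S + d) * (1 - exp (- \<theta>))"
    using mult_left_mono[OF gap, of "S + d"] assms(2,3) by linarith
  also have "\<dots> \<le> - \<theta> * S + q * (1 - exp (- \<theta>))"
    using mult_right_mono[OF assms(5), of "1 - exp (- \<theta>)"] gap assms(1) by simp
  also have "\<dots> = - \<theta> * S - q * (exp (- \<theta>) - 1)"
    by (simp add: algebra_simps)
  finally show ?thesis .
qed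

lemma robust_exponent_le_tilt_bound:
  fixes c k :: real
  assumes "0 < c" "0 < k"
  defines "\<theta> \<equiv> min (c / (4 * sqrt k)) (1 / 2)"
  shows "min (c\<^sup>2 / 8) (c * sqrt k / 4) \<le> \<theta> * (c * sqrt k - \<theta> * k) / (1 + \<theta>)"
proof -
  define s where "s = sqrt k"
  have s: "0 < s" "k = s\<^sup>2"
    using assms(2) by (simp_all add: s_def)
  show ?thesis
  proof (cases "c \<le> 2 * s")
    case True
    then have \<theta>: "\<theta> = c / (4 * s)"
      using s(1) by (simp add: \<theta>_def s_def min_def field_simps)
    have "(1 + \<theta>) * (c\<^sup>2 / 8) \<le> 3 / 2 * (c\<^sup>2 / 8)"
      using True s(1) by (intro mult_right_mono) (auto simp: \<theta> field_simps)
    also have "\<dots> = \<theta> * (c * s - \<theta> * k)"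
      using s by (simp add: \<theta> field_simps power2_eq_square)
    finally have "(1 + \<theta>) * (c\<^sup>2 / 8) \<le> \<theta> * (c * s - \<theta> * k)" .
    moreover have "0 < 1 + \<theta>"
      using s(1) assms(1) by (simp add: \<theta> add_pos_nonneg)
    ultimately have "c\<^sup>2 / 8 \<le> \<theta> * (c * s - \<theta> * k) / (1 + \<theta>)"
      by (metis pos_le_divide_eq mult.commute)
    then show ?thesis
      unfolding s_def by (simp add: min.coboundedI1)
  next
    case False
    then have \<theta>: "\<theta> = 1 / 2"
      using s(1) by (simp add: \<theta>_def s_def min_def field_simps)
    have "2 * s * s \<le> c * s"
      using False s(1) by (intro mult_right_mono) auto
    then have "c * s / 4 \<le> \<theta> * (c * s - \<theta> * k) / (1 + \<theta>)"
      using s by (simp add: \<theta> field_simps power2_eq_square)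
    then show ?thesis
      unfolding s_def by (simp add: min.coboundedI2)
  qed
qed

lemma samples_eq_sum: "(of_nat (samples \<omega> j) :: 'a::semiring_1) = (\<Sum>i<j. of_bool (\<omega> i))"
proof -
  have "{i. i < j \<and> \<omega> i} = {..<j} \<inter> {i. \<omega> i}"
    by blast
  then show ?thesis
    by (simp add: samples_def)
qed

lemma samples_Suc: "samples \<omega> (Suc j) = samples \<omega> j + of_bool (\<omega> j)"
  using samples_eq_sum[of \<omega> "Suc j", where 'a=nat] samples_eq_sum[of \<omega> j, where 'a=nat] by simp

lemma samples_attains:
  assumes "k \<le> samples \<omega> j"
  shows "\<exists>r\<le>j. samples \<omega> r = k"
  using assms
proof (induction j)
  case (Suc j)
  show ?case
  proof (cases "k \<le> samples \<omega> j")
    case True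
    then show ?thesis
      using Suc.IH le_SucI by blast
  next
    case False
    then have "samples \<omega> (Suc j) = k"
      using Suc.prems by (cases "\<omega> j") (simp_all add: samples_Suc)
    then show ?thesis
      by blast
  qed
qed (simp add: samples_def)

lemma samples_less_before_round_len:
  assumes "j < round_len k \<omega>"
  shows "samples \<omega> j < k"
proof (rule ccontr)
  assume "\<not> samples \<omega> j < k"
  then obtain r where "r \<le> j" "samples \<omega> r = k"
    using samples_attains not_less by blast
  moreover have "round_len k \<omega> \<le> r"
    unfolding round_len_def using \<open>samples \<omega> r = k\<close> by (rule Least_le)
  ultimately show False
    using assms by simp
qed

lemma samples_eq_self:
  assumes "\<And>i. i < j \<Longrightarrow> \<omega> i"
  shows "samples \<omega> j = j"
proof -
  have "{i. i < j \<and> \<omega> i} = {..<j}"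
    using assms by blast
  then show ?thesis
    by (simp add: samples_def)
qed

lemma sum_bernoulli_tilt:
  "(\<Sum>i<j. bernoulli_tilt p \<theta> (\<omega> i)) = \<theta> * real (samples \<omega> j) - p * real j * (exp \<theta> - 1)"
proof -
  have "bernoulli_tilt p \<theta> b = \<theta> * of_bool b - p * (exp \<theta> - 1)" for b
    by (simp add: bernoulli_tilt_def)
  then show ?thesis
    by (simp add: sum_subtractf samples_eq_sum flip: sum_distrib_left)
qed

lemma space_round_space: "space (round_space p) = UNIV"
  by (simp add: round_space_def space_PiM)

lemma sets_round_bad_event: "round_bad_event k eps c n0 \<in> sets (round_space p)"
proof -
  have samples_sum: "samples \<omega> j = (\<Sum>i<j. if \<omega> i then 1 else 0)" for \<omega> j
    using samples_eq_sum[of \<omega> j, where 'a=nat] by (simp add: of_bool_def)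
  have "round_bad_event k eps c n0 = {\<omega> \<in> space (round_space p).
      \<exists>j. j < (LEAST r. (\<Sum>i<r. if \<omega> i then 1 else 0) = k) \<and>
        \<bar>real (n0 + j) - (real n0 + real (\<Sum>i<j. if \<omega> i then 1 else 0) / robust_p k eps c n0)\<bar>
          / real (n0 + j) > eps}"
    by (simp add: round_bad_event_def round_len_def estimate_def samples_sum space_round_space)
  also have "\<dots> \<in> sets (round_space p)"
    unfolding round_space_def by measurable
  finally show ?thesis .
qed

lemma AE_round_space_1: "AE \<omega> in round_space 1. \<forall>i. \<omega> i"
proof -
  have "\<forall>b\<in>set_pmf (bernoulli_pmf 1). b"
  proof
    fix b
    assume "b \<in> set_pmf (bernoulli_pmf 1)"
    then show b
      by (cases b) (simp_all add: set_pmf_iff)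
  qed
  then have "AE b in measure_pmf (bernoulli_pmf 1). b"
    by (simp add: AE_measure_pmf_iff)
  then show ?thesis
    unfolding round_space_def
    by (intro AE_all_countable[THEN iffD2] allI AE_PiM_component) (simp_all add: prob_space_measure_pmf)
qed

lemma robust_p_pos: "0 < c \<Longrightarrow> 1 \<le> k \<Longrightarrow> 0 < eps \<Longrightarrow> 0 < robust_p k eps c n0"
  by (simp add: robust_p_def)

lemma robust_p_le_1: "robust_p k eps c n0 \<le> 1"
  by (simp add: robust_p_def)

lemma robust_p_less_1D:
  assumes "robust_p k eps c n0 < 1" "0 < eps"
  shows "0 < n0" "robust_p k eps c n0 * (eps * n0) = c * sqrt k"
  using assms by (auto simp: robust_p_def min_def split: if_splits)

lemma round_bad_event_exact_sampling:
  assumes "robust_p k eps c n0 = 1" "0 \<le> eps" "\<omega> \<in> round_bad_event k eps c n0"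
  shows "\<exists>i. \<not> \<omega> i"
proof (rule ccontr)
  assume "\<not> (\<exists>i. \<not> \<omega> i)"
  then have "estimate k eps c n0 \<omega> j = real (n0 + j)" for j
    using assms(1) by (simp add: estimate_def samples_eq_self)
  with assms(2,3) show False
    by (simp add: round_bad_event_def)
qed

lemma round_bad_event_deviation:
  assumes "0 < c" "1 \<le> k" "0 < eps" "robust_p k eps c n0 < 1"
    and "\<omega> \<in> round_bad_event k eps c n0"
  shows "\<exists>j. samples \<omega> j < k \<and>
           c * sqrt k \<le> \<bar>real (samples \<omega> j) - robust_p k eps c n0 * real j\<bar>"
proof -
  let ?p = "robust_p k eps c n0"
  have p: "0 < ?p" and n0: "0 < n0" and scale: "?p * (eps * n0) = c * sqrt k"
    using assms robust_p_pos robust_p_less_1D by auto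
  obtain j where "j < round_len k \<omega>"
    and "\<bar>real (n0 + j) - estimate k eps c n0 \<omega> j\<bar> / real (n0 + j) > eps"
    using assms(5) by (auto simp: round_bad_event_def)
  then have "eps * (n0 + j) < \<bar>real j - samples \<omega> j / ?p\<bar>"
    using n0 by (simp add: estimate_def pos_less_divide_eq)
  moreover have "samples \<omega> j - ?p * real j = ?p * (samples \<omega> j / ?p - real j)"
    using p by (simp add: field_simps)
  then have "\<bar>samples \<omega> j - ?p * real j\<bar> = ?p * \<bar>real j - samples \<omega> j / ?p\<bar>"
    using p by (simp add: abs_mult abs_minus_commute)
  ultimately have "?p * (eps * (n0 + j)) < \<bar>samples \<omega> j - ?p * real j\<bar>"
    using p by simp
  moreover have "c * sqrt k \<le> ?p * (eps * (n0 + j))"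
    using scale p assms(3) by (simp add: algebra_simps)
  ultimately show ?thesis
    using samples_less_before_round_len[OF \<open>j < round_len k \<omega>\<close>] by (intro exI[of _ j]) simp
qed

lemma round_bad_event_subset_tilted_reach:
  assumes "0 < c" "1 \<le> k" "0 < eps" "robust_p k eps c n0 < 1"
  defines "p \<equiv> robust_p k eps c n0"
    and "\<theta> \<equiv> min (c / (4 * sqrt k)) (1 / 2)"
    and "\<gamma> \<equiv> min (c\<^sup>2 / 8) (c * sqrt k / 4)"
  shows "round_bad_event k eps c n0 \<subseteq>
           {\<omega>. \<exists>j. \<gamma> \<le> (\<Sum>i<j. bernoulli_tilt p \<theta> (\<omega> i))} \<union>
           {\<omega>. \<exists>j. \<gamma> \<le> (\<Sum>i<j. bernoulli_tilt p (- \<theta>) (\<omega> i))}"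
proof
  fix \<omega>
  assume "\<omega> \<in> round_bad_event k eps c n0"
  then obtain j where less: "samples \<omega> j < k"
    and dev: "c * sqrt k \<le> \<bar>real (samples \<omega> j) - p * real j\<bar>"
    using round_bad_event_deviation assms(1-4) unfolding p_def by blast
  define S where "S = real (samples \<omega> j)"
  have \<theta>: "0 \<le> \<theta>" "\<theta> \<le> 1"
    using assms(1) by (auto simp: \<theta>_def)
  have d: "0 \<le> c * sqrt k"
    using assms(1) by simp
  have S: "0 \<le> S" "S \<le> k"
    using less by (auto simp: S_def)
  have \<gamma>_le: "\<gamma> \<le> \<theta> * (c * sqrt k - \<theta> * k) / (1 + \<theta>)"
    unfolding \<gamma>_def \<theta>_def using robust_exponent_le_tilt_bound[of c "real k"] assms(1,2) by simp
  have \<gamma>_nonneg: "0 \<le> \<gamma>"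
    using assms(1) by (simp add: \<gamma>_def)
  have shrink: "x / (1 + \<theta>) \<le> x" if "0 \<le> x / (1 + \<theta>)" for x
    using that \<theta>(1) by (simp add: divide_le_eq zero_le_divide_iff algebra_simps)
  show "\<omega> \<in> {\<omega>. \<exists>j. \<gamma> \<le> (\<Sum>i<j. bernoulli_tilt p \<theta> (\<omega> i))} \<union>
           {\<omega>. \<exists>j. \<gamma> \<le> (\<Sum>i<j. bernoulli_tilt p (- \<theta>) (\<omega> i))}"
  proof (cases "p * real j \<le> S")
    case True
    then have "p * real j \<le> S - c * sqrt k"
      using dev by (simp add: S_def)
    then have "\<theta> * (c * sqrt k - \<theta> * k) \<le> (\<Sum>i<j. bernoulli_tilt p \<theta> (\<omega> i))"
      using tilted_upper_deviation_ge[OF \<theta> d S] by (simp add: sum_bernoulli_tilt S_def)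
    moreover have "\<theta> * (c * sqrt k - \<theta> * k) / (1 + \<theta>) \<le> \<theta> * (c * sqrt k - \<theta> * k)"
      using shrink \<gamma>_le \<gamma>_nonneg by (meson order_trans)
    ultimately have "\<gamma> \<le> (\<Sum>i<j. bernoulli_tilt p \<theta> (\<omega> i))"
      using \<gamma>_le by linarith
    then show ?thesis
      by blast
  next
    case False
    then have "S + c * sqrt k \<le> p * real j"
      using dev by (simp add: S_def)
    then have "\<theta> * (c * sqrt k - \<theta> * k) / (1 + \<theta>) \<le> (\<Sum>i<j. bernoulli_tilt p (- \<theta>) (\<omega> i))"
      using tilted_lower_deviation_ge[OF \<theta>(1) d S] by (simp add: sum_bernoulli_tilt S_def)
    then have "\<gamma> \<le> (\<Sum>i<j. bernoulli_tilt p (- \<theta>) (\<omega> i))"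
      using \<gamma>_le by linarith
    then show ?thesis
      by blast
  qed
qed

lemma measure_round_bad_event_exact_sampling:
  assumes "robust_p k eps c n0 = 1" "0 \<le> eps"
  shows "measure (round_space 1) (round_bad_event k eps c n0) = 0"
proof -
  have "AE \<omega> in round_space 1. \<omega> \<notin> round_bad_event k eps c n0"
    using AE_round_space_1 by eventually_elim (use round_bad_event_exact_sampling assms in blast)
  then have "emeasure (round_space 1) {\<omega> \<in> space (round_space 1). \<omega> \<in> round_bad_event k eps c n0} = 0"
    by (rule emeasure_eq_0_AE)
  moreover have "{\<omega> \<in> space (round_space 1). \<omega> \<in> round_bad_event k eps c n0} = round_bad_event k eps c n0"
    by (simp add: space_round_space)
  ultimately show ?thesis
    by (simp add: measure_def)
qed

lemma measure_round_bad_event_le: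
  assumes "0 < c" "1 \<le> k" "0 < eps" "robust_p k eps c n0 < 1"
  defines "p \<equiv> robust_p k eps c n0"
    and "\<gamma> \<equiv> min (c\<^sup>2 / 8) (c * sqrt k / 4)"
  shows "measure (round_space p) (round_bad_event k eps c n0) \<le> 2 * exp (- \<gamma>)"
proof -
  let ?reach = "\<lambda>\<theta>. {\<omega>. \<exists>j. \<gamma> \<le> (\<Sum>i<j. bernoulli_tilt p \<theta> (\<omega> i))}"
  define \<theta> where "\<theta> = min (c / (4 * sqrt k)) (1 / 2)"
  interpret prob_space "round_space p"
    unfolding round_space_def by (intro prob_space_PiM measure_pmf.prob_space_axioms)
  have p: "0 \<le> p" "p \<le> 1"
    using robust_p_pos[OF assms(1-3)] robust_p_le_1 by (auto simp: p_def less_imp_le)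
  have sets_reach: "?reach \<theta>' \<in> sets (round_space p)" for \<theta>'
    unfolding round_space_def by (rule sets_partial_sums_reach)
  have ville: "measure (round_space p) (?reach \<theta>') \<le> exp (- \<gamma>)" for \<theta>'
    unfolding round_space_def using p by (intro ville_maximal_inequality nn_integral_exp_bernoulli_tilt_le)
  have "round_bad_event k eps c n0 \<subseteq> ?reach \<theta> \<union> ?reach (- \<theta>)"
    unfolding p_def \<theta>_def \<gamma>_def by (rule round_bad_event_subset_tilted_reach[OF assms(1-4)])
  then have "measure (round_space p) (round_bad_event k eps c n0)
      \<le> measure (round_space p) (?reach \<theta> \<union> ?reach (- \<theta>))"
    by (intro finite_measure_mono sets.Un sets_reach)
  also have "\<dots> \<le> measure (round_space p) (?reach \<theta>) + measure (round_space p) (?reach (- \<theta>))"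
    by (intro measure_Un_le sets_reach)
  also have "\<dots> \<le> 2 * exp (- \<gamma>)"
    using ville[of \<theta>] ville[of "- \<theta>"] by simp
  finally show ?thesis .
qed

theorem mainTheorem8:
  fixes k n0 :: nat and eps c :: real
  assumes "k \<ge> 1" and "eps > 0" and "c \<ge> 1"
  shows "round_bad_event k eps c n0 \<in> sets (round_space (robust_p k eps c n0)) \<and>
         measure (round_space (robust_p k eps c n0)) (round_bad_event k eps c n0)
           \<le> 2 * exp (- min (c^2 / 8) (c * sqrt (real k) / 4))"
proof (intro conjI)
  show "round_bad_event k eps c n0 \<in> sets (round_space (robust_p k eps c n0))"
    by (rule sets_round_bad_event)
  show "measure (round_space (robust_p k eps c n0)) (round_bad_event k eps c n0)
          \<le> 2 * exp (- min (c^2 / 8) (c * sqrt (real k) / 4))"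
  proof (cases "robust_p k eps c n0 = 1")
    case True
    then show ?thesis
      using measure_round_bad_event_exact_sampling[OF True] assms(2) by simp
  next
    case False
    then have "robust_p k eps c n0 < 1"
      using robust_p_le_1[of k eps c n0] by simp
    then show ?thesis
      using measure_round_bad_event_le assms by simp
  qed
qed

end
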